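(* Let $n\ge1$, $d=2^n$, and let $|\psi\rangle$ be an $n$-qubit pure state. Then $|St(|\psi\rangle)|\le d^2/\mathrm{card}(|\psi\rangle)$; equivalently $M_0(|\psi\rangle)\le \nu(|\psi\rangle)$. Consequently $M_\alpha(|\psi\rangle)\le\nu(|\psi\rangle)$ for every $\alpha\ge0$.
   Context: Logarithms are base 2. $\mathcal{P}_n$ is the set of $4^n$ $n$-qubit Pauli strings $\sigma_1\otimes\cdots\otimes\sigma_n$, $\sigma_i\in\{I,X,Y,Z\}$ (no phases). $\Xi_P(|\psi\rangle)=d^{-1}\langle\psi|P|\psi\rangle^2$. The stabilizer $\alpha$-Rényi entropy is $M_\alpha(|\psi\rangle)=\frac{1}{1-\alpha}\log\sum_{P\in\mathcal{P}_n}\Xi_P^\alpha-\log d$ for $\alpha\ne1$ (for $\alpha=0$ summing only over $P$ with $\Xi_P\neq0$), and $M_1=-\sum_P\Xi_P\log\Xi_P-\log d$. $\mathrm{card}(|\psi\rangle)=|\{P\in\mathcal{P}_n:\langle\psi|P|\psi\rangle\ne0\}|$, so $M_0(|\psi\rangle)=\log(\mathrm{card}(|\psi\rangle)/d)$. $St(|\psi\rangle)=\{P\in\mathcal{P}_n: P|\psi\rangle=\pm|\psi\rangle\}$, and the stabilizer nullity is $\nu(|\psi\rangle)=n-\log|St(|\psi\rangle)|$. *)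

theory Defs
  imports "HOL-Analysis.Analysis"
begin

datatype pauli = PI | PX | PY | PZ

text \<open>Matrix entry (row r, column c) of a single-qubit Pauli; False = basis state 0, True = 1.\<close>
fun pauli_entry :: "pauli \<Rightarrow> bool \<Rightarrow> bool \<Rightarrow> complex" where
  "pauli_entry PI r c = (if r = c then 1 else 0)"
| "pauli_entry PX r c = (if r \<noteq> c then 1 else 0)"
| "pauli_entry PY r c = (if r = c then 0 else if r then \<i> else - \<i>)"
| "pauli_entry PZ r c = (if r = c then (if r then -1 else 1) else 0)"

text \<open>n-qubit Pauli strings: lists of length n. Computational basis states of n qubits are
  indexed by x < 2^n, qubit i being bit i of x.\<close>
definition pauli_strings :: "nat \<Rightarrow> pauli list set" where
  "pauli_strings n = {P. length P = n}"

definition pstr_entry :: "nat \<Rightarrow> pauli list \<Rightarrow> nat \<Rightarrow> nat \<Rightarrow> complex" where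
  "pstr_entry n P x y = (\<Prod>i<n. pauli_entry (P ! i) (bit x i) (bit y i))"

text \<open>A state vector is a function nat => complex (only indices < 2^n matter).\<close>
definition apply_pstr :: "nat \<Rightarrow> pauli list \<Rightarrow> (nat \<Rightarrow> complex) \<Rightarrow> nat \<Rightarrow> complex" where
  "apply_pstr n P psi x = (\<Sum>y<2^n. pstr_entry n P x y * psi y)"

definition pure_state :: "nat \<Rightarrow> (nat \<Rightarrow> complex) \<Rightarrow> bool" where
  "pure_state n psi \<longleftrightarrow> (\<Sum>x<2^n. (cmod (psi x))\<^sup>2) = 1"

definition expval :: "nat \<Rightarrow> (nat \<Rightarrow> complex) \<Rightarrow> pauli list \<Rightarrow> complex" where
  "expval n psi P = (\<Sum>x<2^n. cnj (psi x) * apply_pstr n P psi x)"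

text \<open>Xi_P(psi) = d^{-1} <psi|P|psi>^2, d = 2^n (the expectation value is real).\<close>
definition Xi :: "nat \<Rightarrow> (nat \<Rightarrow> complex) \<Rightarrow> pauli list \<Rightarrow> real" where
  "Xi n psi P = Re ((expval n psi P)\<^sup>2) / 2 ^ n"

definition pauli_card :: "nat \<Rightarrow> (nat \<Rightarrow> complex) \<Rightarrow> nat" where
  "pauli_card n psi = card {P \<in> pauli_strings n. expval n psi P \<noteq> 0}"

definition stab_group :: "nat \<Rightarrow> (nat \<Rightarrow> complex) \<Rightarrow> pauli list set" where
  "stab_group n psi = {P \<in> pauli_strings n.
      (\<forall>x<2^n. apply_pstr n P psi x = psi x) \<or> (\<forall>x<2^n. apply_pstr n P psi x = - psi x)}"

definition stab_nullity :: "nat \<Rightarrow> (nat \<Rightarrow> complex) \<Rightarrow> real" where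
  "stab_nullity n psi = real n - log 2 (real (card (stab_group n psi)))"

text \<open>Stabilizer alpha-Renyi entropy. For alpha \<noteq> 1 the sum is over P with Xi_P \<noteq> 0
  (for alpha > 0 zero terms contribute nothing; for alpha = 0 this is the stated convention).\<close>
definition stab_renyi :: "nat \<Rightarrow> (nat \<Rightarrow> complex) \<Rightarrow> real \<Rightarrow> real" where
  "stab_renyi n psi \<alpha> =
     (if \<alpha> = 1 then
        - (\<Sum>P\<in>{P \<in> pauli_strings n. Xi n psi P \<noteq> 0}. Xi n psi P * log 2 (Xi n psi P)) - log 2 (2 ^ n)
      else
        1 / (1 - \<alpha>) * log 2 (\<Sum>P\<in>{P \<in> pauli_strings n. Xi n psi P \<noteq> 0}. Xi n psi P powr \<alpha>)
          - log 2 (2 ^ n))"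

end

theory Submission
  imports Defs
begin

text \<open>
  Two Pauli strings either commute or anticommute; write \<chi>(P, Q) = \<plusminus>1 for the sign.
  Summed over all Q, \<chi>(P, Q) vanishes unless P is the identity, where it gives 4^n.
  If P stabilizes \<psi> and \<langle>\<psi>|Q|\<psi>\<rangle> \<noteq> 0, then
  \<langle>\<psi>|Q|\<psi>\<rangle> = \<langle>P\<psi>|Q|P\<psi>\<rangle> = \<langle>\<psi>|PQP|\<psi>\<rangle> = \<chi>(P, Q) \<langle>\<psi>|Q|\<psi>\<rangle>, so P and Q commute.
  Since St(\<psi>) is closed under multiplication, the sum of \<chi>(P, Q) over P \<in> St(\<psi>) is
  either |St(\<psi>)| or 0.
  Summing it over the Q in the support of \<psi> and then over all Q gives card(\<psi>) |St(\<psi>)| \<le> 4^n.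
  Finally \<Xi> is a probability distribution (Parseval) supported on card(\<psi>) Pauli strings,
  and every Renyi entropy of such a distribution is at most log card(\<psi>); hence
  M_\<alpha> \<le> M_0 \<le> \<nu>.
\<close>

section \<open>Single-qubit Pauli algebra\<close>

lemma UNIV_pauli: "(UNIV :: pauli set) = {PI, PX, PY, PZ}"
  by (auto intro: pauli.exhaust)

lemma finite_UNIV_pauli [simp]: "finite (UNIV :: pauli set)"
  by (simp add: UNIV_pauli)

lemma sum_UNIV_pauli: "(\<Sum>a\<in>UNIV. f a) = f PI + f PX + f PY + f PZ"
  by (simp add: UNIV_pauli add.assoc)

fun pauli_mult :: "pauli \<Rightarrow> pauli \<Rightarrow> pauli" where
  "pauli_mult PI b = b"
| "pauli_mult a PI = a"
| "pauli_mult PX PX = PI" | "pauli_mult PX PY = PZ" | "pauli_mult PX PZ = PY"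
| "pauli_mult PY PX = PZ" | "pauli_mult PY PY = PI" | "pauli_mult PY PZ = PX"
| "pauli_mult PZ PX = PY" | "pauli_mult PZ PY = PX" | "pauli_mult PZ PZ = PI"

definition pauli_phase :: "pauli \<Rightarrow> pauli \<Rightarrow> complex" where
  "pauli_phase a b =
    (if a = PI \<or> b = PI \<or> a = b then 1
     else if (a, b) \<in> {(PX, PY), (PY, PZ), (PZ, PX)} then \<i> else - \<i>)"

definition pauli_comm_sign :: "pauli \<Rightarrow> pauli \<Rightarrow> real" where
  "pauli_comm_sign a b = (if a = PI \<or> b = PI \<or> a = b then 1 else -1)"

lemma pauli_entry_mult:
  "(\<Sum>k\<in>UNIV. pauli_entry a r k * pauli_entry b k s) = pauli_phase a b * pauli_entry (pauli_mult a b) r s"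
  by (cases a; cases b; cases r; cases s; simp add: UNIV_bool pauli_phase_def)

lemma cnj_pauli_entry: "cnj (pauli_entry a r c) = pauli_entry a c r"
  by (cases a; cases c; cases r; simp)

lemma pauli_mult_cancel_left: "pauli_mult a (pauli_mult a b) = b"
  by (cases a; cases b; simp)

lemma pauli_mult_conjugate: "pauli_mult a (pauli_mult b a) = b"
  by (cases a; cases b; simp)

lemma pauli_phase_conjugate:
  "pauli_phase b a * pauli_phase a (pauli_mult b a) = pauli_comm_sign a b"
  by (cases a; cases b; simp add: pauli_phase_def pauli_comm_sign_def)

lemma norm_pauli_phase: "cmod (pauli_phase a b) = 1"
  by (simp add: pauli_phase_def)

lemma pauli_comm_sign_mult_left:
  "pauli_comm_sign (pauli_mult a b) c = pauli_comm_sign a c * pauli_comm_sign b c"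
  by (cases a; cases b; cases c; simp add: pauli_comm_sign_def)

lemma abs_pauli_comm_sign: "\<bar>pauli_comm_sign a b\<bar> = 1"
  by (simp add: pauli_comm_sign_def)

lemma sum_pauli_comm_sign: "(\<Sum>b\<in>UNIV. pauli_comm_sign a b) = (if a = PI then 4 else 0)"
  unfolding sum_UNIV_pauli by (cases a; simp add: pauli_comm_sign_def)

lemma pauli_entry_completeness:
  "(\<Sum>a\<in>UNIV. pauli_entry a r c * cnj (pauli_entry a r' c')) = (if r = r' \<and> c = c' then 2 else 0)"
  by (cases r; cases c; cases r'; cases c'; simp add: sum_UNIV_pauli)

section \<open>Sums over bit strings and Pauli strings\<close>

lemma less_pow2_eq_iff_bits:
  fixes x y :: nat
  assumes "x < 2^n" "y < 2^n"
  shows "x = y \<longleftrightarrow> (\<forall>i<n. bit x i = bit y i)"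
proof
  assume "\<forall>i<n. bit x i = bit y i"
  then have "take_bit n x = take_bit n y"
    by (auto simp: bit_eq_iff bit_take_bit_iff)
  then show "x = y" using assms by (simp add: take_bit_nat_eq_self)
qed simp

lemma sum_lessThan_pow2_prod_bit:
  fixes g :: "nat \<Rightarrow> bool \<Rightarrow> 'a::comm_semiring_1"
  shows "(\<Sum>y<(2::nat)^n. \<Prod>i<n. g i (bit y i)) = (\<Prod>i<n. \<Sum>b\<in>UNIV. g i b)"
proof (induction n arbitrary: g)
  case 0
  then show ?case by simp
next
  case (Suc n)
  obtain m where "(2::nat)^n = Suc m"
    using gr0_implies_Suc[of "2^n"] by auto
  then have "{..<(2::nat)^Suc n} = {..Suc (2 * m)}" "{..m} = {..<(2::nat)^n}"
    by auto
  then have "(\<Sum>y<(2::nat)^Suc n. \<Prod>i<Suc n. g i (bit y i))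
      = (\<Sum>y<(2::nat)^n. (\<Prod>i<Suc n. g i (bit (2*y) i)) + (\<Prod>i<Suc n. g i (bit (Suc (2*y)) i)))"
    by (simp only: sum.in_pairs_0)
  also have "\<dots> = (\<Sum>y<(2::nat)^n. (\<Sum>b\<in>UNIV. g 0 b) * (\<Prod>i<n. g (Suc i) (bit y i)))"
    by (simp add: prod.lessThan_Suc_shift bit_0 bit_Suc UNIV_bool algebra_simps del: prod.lessThan_Suc)
  also have "\<dots> = (\<Prod>i<Suc n. \<Sum>b\<in>UNIV. g i b)"
    by (simp add: sum_distrib_left[symmetric] Suc.IH[of "\<lambda>i. g (Suc i)"] prod.lessThan_Suc_shift del: prod.lessThan_Suc)
  finally show ?case .
qed

lemma mem_pauli_strings_iff: "P \<in> pauli_strings n \<longleftrightarrow> length P = n"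
  by (simp add: pauli_strings_def)

lemma pauli_strings_Suc:
  "pauli_strings (Suc n) = (\<lambda>(a, P). a # P) ` (UNIV \<times> pauli_strings n)"
  unfolding pauli_strings_def by (auto simp: length_Suc_conv image_iff)

lemma finite_pauli_strings [simp]: "finite (pauli_strings n)"
  using finite_lists_length_eq[OF finite_UNIV_pauli, of n] by (simp add: pauli_strings_def)

lemma sum_pauli_strings_prod:
  fixes f :: "nat \<Rightarrow> pauli \<Rightarrow> 'a::comm_semiring_1"
  shows "(\<Sum>P\<in>pauli_strings n. \<Prod>i<n. f i (P!i)) = (\<Prod>i<n. \<Sum>a\<in>UNIV. f i a)"
proof (induction n arbitrary: f)
  case 0
  then show ?case by (simp add: pauli_strings_def)
next
  case (Suc n)
  have inj: "inj_on (\<lambda>(a::pauli, P). a # P) X" for X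
    by (auto simp: inj_on_def)
  have "(\<Sum>P\<in>pauli_strings (Suc n). \<Prod>i<Suc n. f i (P!i))
      = (\<Sum>(a, P)\<in>UNIV \<times> pauli_strings n. f 0 a * (\<Prod>i<n. f (Suc i) (P!i)))"
    unfolding pauli_strings_Suc sum.reindex[OF inj]
    by (simp add: case_prod_beta prod.lessThan_Suc_shift del: prod.lessThan_Suc)
  also have "\<dots> = (\<Prod>i<Suc n. \<Sum>a\<in>UNIV. f i a)"
    by (simp add: sum.cartesian_product[symmetric] sum_product[symmetric] Suc.IH[of "\<lambda>i. f (Suc i)"]
        prod.lessThan_Suc_shift del: prod.lessThan_Suc)
  finally show ?case .
qed

section \<open>Pauli strings as operators\<close>

definition pstr_mult :: "pauli list \<Rightarrow> pauli list \<Rightarrow> pauli list" where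
  "pstr_mult P Q = map2 pauli_mult P Q"

definition pstr_phase :: "nat \<Rightarrow> pauli list \<Rightarrow> pauli list \<Rightarrow> complex" where
  "pstr_phase n P Q = (\<Prod>i<n. pauli_phase (P!i) (Q!i))"

definition pstr_comm_sign :: "nat \<Rightarrow> pauli list \<Rightarrow> pauli list \<Rightarrow> real" where
  "pstr_comm_sign n P Q = (\<Prod>i<n. pauli_comm_sign (P!i) (Q!i))"

lemma length_pstr_mult [simp]: "length (pstr_mult P Q) = min (length P) (length Q)"
  by (simp add: pstr_mult_def)

lemma nth_pstr_mult: "i < length P \<Longrightarrow> i < length Q \<Longrightarrow> pstr_mult P Q ! i = pauli_mult (P!i) (Q!i)"
  by (simp add: pstr_mult_def)

lemma pstr_mult_cancel_left: "length P = length Q \<Longrightarrow> pstr_mult P (pstr_mult P Q) = Q"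
  by (rule nth_equalityI) (auto simp: nth_pstr_mult pauli_mult_cancel_left)

lemma pstr_mult_conjugate: "length P = length Q \<Longrightarrow> pstr_mult P (pstr_mult Q P) = Q"
  by (rule nth_equalityI) (auto simp: nth_pstr_mult pauli_mult_conjugate)

lemma pstr_phase_conjugate:
  "length P = n \<Longrightarrow> length Q = n \<Longrightarrow>
    pstr_phase n Q P * pstr_phase n P (pstr_mult Q P) = pstr_comm_sign n P Q"
  unfolding pstr_phase_def pstr_comm_sign_def
  by (simp add: prod.distrib[symmetric] nth_pstr_mult pauli_phase_conjugate)

lemma norm_pstr_phase: "cmod (pstr_phase n P Q) = 1"
  unfolding pstr_phase_def prod_norm[symmetric] by (simp add: norm_pauli_phase)

lemma pstr_comm_sign_mult_left:
  "length P = n \<Longrightarrow> length P' = n \<Longrightarrow> length Q = n \<Longrightarrow>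
    pstr_comm_sign n (pstr_mult P P') Q = pstr_comm_sign n P Q * pstr_comm_sign n P' Q"
  unfolding pstr_comm_sign_def by (simp add: prod.distrib[symmetric] nth_pstr_mult pauli_comm_sign_mult_left)

lemma abs_pstr_comm_sign: "\<bar>pstr_comm_sign n P Q\<bar> = 1"
  unfolding pstr_comm_sign_def abs_prod by (simp add: abs_pauli_comm_sign)

lemma sum_pstr_comm_sign:
  assumes "length P = n"
  shows "(\<Sum>Q\<in>pauli_strings n. pstr_comm_sign n P Q) = (if P = replicate n PI then 4^n else 0)"
proof -
  have "(\<Sum>Q\<in>pauli_strings n. pstr_comm_sign n P Q) = (\<Prod>i<n. if P!i = PI then 4 else 0)"
    unfolding pstr_comm_sign_def sum_pauli_strings_prod[of "\<lambda>i. pauli_comm_sign (P!i)"]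
    by (simp add: sum_pauli_comm_sign)
  also have "\<dots> = (if P = replicate n PI then 4^n else 0)"
  proof (cases "P = replicate n PI")
    case False
    then obtain i where "i < n" "P!i \<noteq> PI"
      using assms by (metis in_set_conv_nth replicate_eqI)
    then show ?thesis
      using False by (auto intro!: prod_zero bexI[of _ i])
  qed simp
  finally show ?thesis .
qed

lemma pstr_entry_mult:
  assumes "length P = n" "length Q = n"
  shows "(\<Sum>y<2^n. pstr_entry n P x y * pstr_entry n Q y z) = pstr_phase n P Q * pstr_entry n (pstr_mult P Q) x z"
proof -
  have "(\<Sum>y<2^n. pstr_entry n P x y * pstr_entry n Q y z)
      = (\<Prod>i<n. \<Sum>k\<in>UNIV. pauli_entry (P!i) (bit x i) k * pauli_entry (Q!i) k (bit z i))"
    unfolding pstr_entry_def prod.distrib[symmetric] by (rule sum_lessThan_pow2_prod_bit)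
  also have "\<dots> = pstr_phase n P Q * pstr_entry n (pstr_mult P Q) x z"
    unfolding pstr_phase_def pstr_entry_def
    by (simp add: pauli_entry_mult nth_pstr_mult assms prod.distrib)
  finally show ?thesis .
qed

lemma cnj_pstr_entry: "cnj (pstr_entry n P x y) = pstr_entry n P y x"
  unfolding pstr_entry_def by (simp add: cnj_pauli_entry)

lemma pstr_entry_identity:
  assumes "x < 2^n" "y < 2^n"
  shows "pstr_entry n (replicate n PI) x y = (if x = y then 1 else 0)"
proof (cases "x = y")
  case False
  then obtain i where "i < n" "bit x i \<noteq> bit y i"
    using less_pow2_eq_iff_bits[OF assms] by blast
  then show ?thesis
    unfolding pstr_entry_def using False by (auto intro!: prod_zero bexI[of _ i])
qed (simp add: pstr_entry_def)

lemma pstr_entry_completeness: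
  assumes "x < 2^n" "y < 2^n" "x' < 2^n" "y' < 2^n"
  shows "(\<Sum>P\<in>pauli_strings n. pstr_entry n P x y * cnj (pstr_entry n P x' y'))
     = (if x = x' \<and> y = y' then 2^n else 0)"
proof -
  have "(\<Sum>P\<in>pauli_strings n. pstr_entry n P x y * cnj (pstr_entry n P x' y'))
      = (\<Prod>i<n. if bit x i = bit x' i \<and> bit y i = bit y' i then 2 else 0)"
    unfolding pstr_entry_def cnj_prod prod.distrib[symmetric] sum_pauli_strings_prod[of
        "\<lambda>i a. pauli_entry a (bit x i) (bit y i) * cnj (pauli_entry a (bit x' i) (bit y' i))"]
    by (simp only: pauli_entry_completeness)
  also have "\<dots> = (if x = x' \<and> y = y' then 2^n else 0)"
  proof (cases "x = x' \<and> y = y'")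
    case False
    then obtain i where "i < n" "\<not> (bit x i = bit x' i \<and> bit y i = bit y' i)"
      using less_pow2_eq_iff_bits[of x n x'] less_pow2_eq_iff_bits[of y n y'] assms by blast
    then show ?thesis
      using False by (auto intro!: prod_zero bexI[of _ i])
  qed simp
  finally show ?thesis .
qed

lemma apply_pstr_cong: "(\<And>y. y < 2^n \<Longrightarrow> f y = g y) \<Longrightarrow> apply_pstr n P f x = apply_pstr n P g x"
  unfolding apply_pstr_def by (rule sum.cong) auto

lemma apply_pstr_cmult: "apply_pstr n P (\<lambda>y. c * f y) x = c * apply_pstr n P f x"
  unfolding apply_pstr_def by (simp add: sum_distrib_left algebra_simps)

lemma apply_pstr_identity: "x < 2^n \<Longrightarrow> apply_pstr n (replicate n PI) f x = f x"
proof -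
  assume x: "x < 2^n"
  have "apply_pstr n (replicate n PI) f x = (\<Sum>y<2^n. if x = y then f y else 0)"
    unfolding apply_pstr_def by (rule sum.cong) (simp_all add: pstr_entry_identity x)
  then show ?thesis
    using x by simp
qed

lemma apply_pstr_apply_pstr:
  assumes "length P = n" "length Q = n"
  shows "apply_pstr n P (apply_pstr n Q f) = (\<lambda>x. pstr_phase n P Q * apply_pstr n (pstr_mult P Q) f x)"
proof
  fix x
  have "apply_pstr n P (apply_pstr n Q f) x
      = (\<Sum>z<2^n. (\<Sum>y<2^n. pstr_entry n P x y * pstr_entry n Q y z) * f z)"
    unfolding apply_pstr_def sum_distrib_left sum_distrib_right
    by (subst sum.swap) (simp add: mult.assoc)
  then show "apply_pstr n P (apply_pstr n Q f) x = pstr_phase n P Q * apply_pstr n (pstr_mult P Q) f x"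
    unfolding pstr_entry_mult[OF assms] apply_pstr_def by (simp add: sum_distrib_left mult.assoc)
qed

definition braket :: "nat \<Rightarrow> (nat \<Rightarrow> complex) \<Rightarrow> (nat \<Rightarrow> complex) \<Rightarrow> complex" where
  "braket n f g = (\<Sum>x<2^n. cnj (f x) * g x)"

lemma cnj_braket: "cnj (braket n f g) = braket n g f"
  unfolding braket_def by (simp add: mult.commute)

lemma braket_cmult_right: "braket n f (\<lambda>x. c * g x) = c * braket n f g"
  unfolding braket_def by (simp add: sum_distrib_left mult_ac)

lemma braket_apply_pstr: "braket n f (apply_pstr n P g) = braket n (apply_pstr n P f) g"
proof -
  have "braket n f (apply_pstr n P g) = (\<Sum>x<2^n. \<Sum>y<2^n. cnj (f x) * pstr_entry n P x y * g y)"
    unfolding braket_def apply_pstr_def by (simp add: sum_distrib_left mult.assoc)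
  also have "\<dots> = braket n (apply_pstr n P f) g"
    unfolding braket_def apply_pstr_def
    by (subst sum.swap) (simp add: sum_distrib_left sum_distrib_right cnj_pstr_entry mult_ac)
  finally show ?thesis .
qed

lemma braket_self_eq_1: "pure_state n psi \<Longrightarrow> braket n psi psi = 1"
proof -
  assume "pure_state n psi"
  then have "(\<Sum>x<2^n. complex_of_real ((cmod (psi x))\<^sup>2)) = 1"
    unfolding pure_state_def by (metis of_real_1 of_real_sum)
  then show ?thesis
    unfolding braket_def complex_norm_square by (simp add: mult.commute)
qed

lemma expval_eq_braket: "expval n psi P = braket n psi (apply_pstr n P psi)"
  unfolding expval_def braket_def ..

lemma expval_in_Reals: "expval n psi P \<in> \<real>"
  unfolding Reals_cnj_iff expval_eq_braket cnj_braket braket_apply_pstr ..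

section \<open>The stabilizer group\<close>

lemma stab_groupE:
  assumes "P \<in> stab_group n psi"
  obtains s where "s = 1 \<or> s = -1" "length P = n" "\<And>x. x < 2^n \<Longrightarrow> apply_pstr n P psi x = s * psi x"
  using assms unfolding stab_group_def mem_pauli_strings_iff
  by (metis (mono_tags, lifting) mem_Collect_eq mult_1 mult_minus1)

lemma length_stab_group: "P \<in> stab_group n psi \<Longrightarrow> length P = n"
  by (simp add: stab_group_def mem_pauli_strings_iff)

lemma stab_group_subset: "stab_group n psi \<subseteq> pauli_strings n"
  unfolding stab_group_def by auto

lemma finite_stab_group [simp]: "finite (stab_group n psi)"
  using finite_subset[OF stab_group_subset] by simp

lemma replicate_PI_in_stab_group: "replicate n PI \<in> stab_group n psi"
  unfolding stab_group_def by (simp add: apply_pstr_identity mem_pauli_strings_iff)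

lemma expval_eigenstate:
  assumes "pure_state n psi" "\<And>x. x < 2^n \<Longrightarrow> apply_pstr n P psi x = c * psi x"
  shows "expval n psi P = c"
proof -
  have "expval n psi P = braket n psi (\<lambda>x. c * psi x)"
    unfolding expval_eq_braket braket_def using assms(2) by simp
  then show ?thesis
    using braket_self_eq_1[OF assms(1)] by (simp add: braket_cmult_right)
qed

lemma Reals_norm_1_cases: "z \<in> \<real> \<Longrightarrow> cmod z = 1 \<Longrightarrow> z = 1 \<or> z = -1"
  by (auto elim!: Reals_cases simp: abs_if split: if_splits)

lemma stab_group_mult_closed:
  assumes pure: "pure_state n psi" and P: "P \<in> stab_group n psi" and P': "P' \<in> stab_group n psi"
  shows "pstr_mult P P' \<in> stab_group n psi"
proof -
  obtain s where s: "s = 1 \<or> s = -1" "length P = n" "\<And>x. x < 2^n \<Longrightarrow> apply_pstr n P psi x = s * psi x"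
    using stab_groupE[OF P] by blast
  obtain s' where s': "s' = 1 \<or> s' = -1" "length P' = n" "\<And>x. x < 2^n \<Longrightarrow> apply_pstr n P' psi x = s' * psi x"
    using stab_groupE[OF P'] by blast
  define c where "c = s * s' / pstr_phase n P P'"
  have phase_nonzero: "pstr_phase n P P' \<noteq> 0"
    using norm_pstr_phase[of n P P'] by auto
  have eigen: "apply_pstr n (pstr_mult P P') psi x = c * psi x" if "x < 2^n" for x
  proof -
    have "pstr_phase n P P' * apply_pstr n (pstr_mult P P') psi x = apply_pstr n P (apply_pstr n P' psi) x"
      by (simp add: apply_pstr_apply_pstr s(2) s'(2))
    also have "\<dots> = apply_pstr n P (\<lambda>y. s' * psi y) x"
      by (rule apply_pstr_cong) (simp add: s'(3))
    also have "\<dots> = s * s' * psi x"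
      by (simp add: apply_pstr_cmult s(3) that)
    finally show ?thesis
      unfolding c_def using phase_nonzero by (simp add: field_simps)
  qed
  have "c \<in> \<real>"
    using expval_in_Reals expval_eigenstate[OF pure eigen] by metis
  moreover have "cmod c = 1"
    unfolding c_def using s(1) s'(1) by (auto simp: norm_divide norm_pstr_phase)
  ultimately have "c = 1 \<or> c = -1"
    by (rule Reals_norm_1_cases)
  then show ?thesis
    using eigen s(2) s'(2) unfolding stab_group_def mem_pauli_strings_iff by auto
qed

lemma stab_group_comm_sign:
  assumes P: "P \<in> stab_group n psi" and Q: "length Q = n" and nz: "expval n psi Q \<noteq> 0"
  shows "pstr_comm_sign n P Q = 1"
proof -
  obtain s where s: "s = 1 \<or> s = -1" "length P = n" "\<And>x. x < 2^n \<Longrightarrow> apply_pstr n P psi x = s * psi x"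
    using stab_groupE[OF P] by blast
  have QP: "apply_pstr n Q (apply_pstr n P psi) x = s * apply_pstr n Q psi x" for x
    using apply_pstr_cong[of n "apply_pstr n P psi" "\<lambda>y. s * psi y" Q x] s(3)
    by (simp add: apply_pstr_cmult)
  have PQP: "apply_pstr n P (apply_pstr n Q (apply_pstr n P psi)) x
      = pstr_comm_sign n P Q * apply_pstr n Q psi x" for x
    using pstr_phase_conjugate[OF s(2) Q] pstr_mult_conjugate[of P Q]
    by (simp add: apply_pstr_apply_pstr s(2) Q apply_pstr_cmult mult.assoc[symmetric])
  have "braket n (apply_pstr n P psi) (apply_pstr n Q (apply_pstr n P psi))
      = (\<Sum>x<2^n. (cnj s * s) * (cnj (psi x) * apply_pstr n Q psi x))"
    unfolding braket_def by (rule sum.cong) (simp_all add: QP s(3) mult_ac)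
  also have "cnj s * s = 1"
    using s(1) by auto
  finally have "expval n psi Q = braket n (apply_pstr n P psi) (apply_pstr n Q (apply_pstr n P psi))"
    by (simp add: expval_def)
  also have "\<dots> = pstr_comm_sign n P Q * expval n psi Q"
    unfolding braket_apply_pstr[symmetric] PQP braket_cmult_right expval_eq_braket ..
  finally have "(1 - pstr_comm_sign n P Q) * expval n psi Q = 0"
    by (simp add: algebra_simps)
  then show ?thesis
    using nz by simp
qed

lemma sum_stab_group_comm_sign_nonneg:
  assumes pure: "pure_state n psi" and Q: "length Q = n"
  shows "(\<Sum>P\<in>stab_group n psi. pstr_comm_sign n P Q) \<ge> 0"
proof (cases "\<forall>P\<in>stab_group n psi. pstr_comm_sign n P Q = 1")
  case False
  then obtain P0 where P0: "P0 \<in> stab_group n psi" "pstr_comm_sign n P0 Q = -1"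
    using abs_pstr_comm_sign by (metis abs_if minus_equation_iff)
  have len: "length P = n" if "P \<in> stab_group n psi" for P
    using that by (rule length_stab_group)
  \<comment> \<open>multiplication by P0 permutes the stabilizer group and flips every sign\<close>
  have "(\<Sum>P\<in>stab_group n psi. pstr_comm_sign n P Q)
      = (\<Sum>P\<in>stab_group n psi. pstr_comm_sign n (pstr_mult P0 P) Q)"
    by (rule sum.reindex_bij_witness[of _ "pstr_mult P0" "pstr_mult P0"])
      (auto simp: pstr_mult_cancel_left len P0 stab_group_mult_closed[OF pure])
  also have "\<dots> = - (\<Sum>P\<in>stab_group n psi. pstr_comm_sign n P Q)"
    by (simp add: pstr_comm_sign_mult_left len P0 Q sum_negf)
  finally show ?thesis
    by simp
qed simp

lemma pauli_card_mult_card_stab_group_le: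
  assumes pure: "pure_state n psi"
  shows "real (pauli_card n psi) * real (card (stab_group n psi)) \<le> 4^n"
proof -
  define A where "A = {Q \<in> pauli_strings n. expval n psi Q \<noteq> 0}"
  define S where "S = stab_group n psi"
  have "real (card A) * real (card S) = (\<Sum>Q\<in>A. \<Sum>P\<in>S. pstr_comm_sign n P Q)"
    using stab_group_comm_sign by (simp add: A_def S_def mem_pauli_strings_iff)
  also have "\<dots> \<le> (\<Sum>Q\<in>pauli_strings n. \<Sum>P\<in>S. pstr_comm_sign n P Q)"
    by (rule sum_mono2) (auto simp: A_def S_def mem_pauli_strings_iff sum_stab_group_comm_sign_nonneg[OF pure])
  also have "\<dots> = (\<Sum>P\<in>S. \<Sum>Q\<in>pauli_strings n. pstr_comm_sign n P Q)"
    by (rule sum.swap)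
  also have "\<dots> = (\<Sum>P\<in>S. if P = replicate n PI then 4^n else 0)"
    by (intro sum.cong) (auto simp: S_def sum_pstr_comm_sign length_stab_group)
  also have "\<dots> = 4^n"
    using replicate_PI_in_stab_group by (simp add: S_def)
  finally show ?thesis
    unfolding pauli_card_def A_def S_def .
qed

section \<open>The Pauli spectrum as a probability distribution\<close>

lemma Xi_eq_norm_expval: "Xi n psi P = (cmod (expval n psi P))\<^sup>2 / 2^n"
proof -
  obtain r where "expval n psi P = of_real r"
    using expval_in_Reals by (rule Reals_cases)
  then show ?thesis
    unfolding Xi_def by (simp flip: of_real_power)
qed

lemma expval_eq_sum_pairs:
  "expval n psi P = (\<Sum>(x, y)\<in>{..<2^n} \<times> {..<2^n}. cnj (psi x) * psi y * pstr_entry n P x y)"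
  unfolding expval_def apply_pstr_def sum.cartesian_product[symmetric]
  by (simp add: sum_distrib_left mult_ac)

lemma sum_norm_expval_squared:
  "(\<Sum>P\<in>pauli_strings n. (cmod (expval n psi P))\<^sup>2) = 2^n * (\<Sum>x<2^n. (cmod (psi x))\<^sup>2)\<^sup>2"
proof -
  define D where "D = {..<(2::nat)^n} \<times> {..<(2::nat)^n}"
  define a where "a u = cnj (psi (fst u)) * psi (snd u)" for u
  define E where "E P u = pstr_entry n P (fst u) (snd u)" for P u
  have expval: "expval n psi P = (\<Sum>u\<in>D. a u * E P u)" for P
    unfolding expval_eq_sum_pairs D_def a_def E_def by (simp add: case_prod_beta)
  have completeness: "(\<Sum>P\<in>pauli_strings n. E P u * cnj (E P v)) = (if u = v then 2^n else 0)"
    if "u \<in> D" "v \<in> D" for u v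
    using that pstr_entry_completeness[of "fst u" n "snd u" "fst v" "snd v"]
    by (auto simp: D_def E_def prod_eq_iff)
  have "complex_of_real (\<Sum>P\<in>pauli_strings n. (cmod (expval n psi P))\<^sup>2)
      = (\<Sum>P\<in>pauli_strings n. \<Sum>u\<in>D. \<Sum>v\<in>D. a u * cnj (a v) * (E P u * cnj (E P v)))"
    unfolding of_real_sum complex_norm_square expval by (simp add: sum_product mult_ac)
  also have "\<dots> = (\<Sum>u\<in>D. \<Sum>v\<in>D. a u * cnj (a v) * (\<Sum>P\<in>pauli_strings n. E P u * cnj (E P v)))"
    unfolding sum_distrib_left by (subst sum.swap) (subst (2) sum.swap, rule refl)
  also have "\<dots> = (\<Sum>u\<in>D. 2^n * (a u * cnj (a u)))"
  proof (rule sum.cong[OF refl])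
    fix u assume u: "u \<in> D"
    have "(\<Sum>v\<in>D. a u * cnj (a v) * (\<Sum>P\<in>pauli_strings n. E P u * cnj (E P v)))
        = (\<Sum>v\<in>D. if u = v then 2^n * (a u * cnj (a v)) else 0)"
      by (rule sum.cong[OF refl]) (simp add: completeness u)
    then show "(\<Sum>v\<in>D. a u * cnj (a v) * (\<Sum>P\<in>pauli_strings n. E P u * cnj (E P v)))
        = 2^n * (a u * cnj (a u))"
      using u by (simp add: D_def)
  qed
  also have "\<dots> = complex_of_real (2^n * (\<Sum>u\<in>D. (cmod (psi (fst u)))\<^sup>2 * (cmod (psi (snd u)))\<^sup>2))"
    unfolding of_real_mult of_real_sum sum_distrib_left
    by (rule sum.cong[OF refl])
      (simp only: of_real_mult complex_norm_square a_def complex_cnj_mult complex_cnj_cnj; simp add: mult_ac)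
  also have "(\<Sum>u\<in>D. (cmod (psi (fst u)))\<^sup>2 * (cmod (psi (snd u)))\<^sup>2) = (\<Sum>x<2^n. (cmod (psi x))\<^sup>2)\<^sup>2"
    unfolding D_def power2_eq_square[of "sum _ _"] sum_product sum.cartesian_product
    by (simp add: case_prod_beta)
  finally show ?thesis
    by (simp only: of_real_eq_iff)
qed

lemma sum_Xi_eq_1: "pure_state n psi \<Longrightarrow> (\<Sum>P\<in>pauli_strings n. Xi n psi P) = 1"
  unfolding Xi_eq_norm_expval sum_divide_distrib[symmetric] sum_norm_expval_squared pure_state_def
  by simp

lemma pauli_card_pos: "pure_state n psi \<Longrightarrow> pauli_card n psi > 0"
proof -
  assume pure: "pure_state n psi"
  have "expval n psi (replicate n PI) = 1"
    using expval_eigenstate[OF pure, of "replicate n PI" 1] by (simp add: apply_pstr_identity)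
  then have "replicate n PI \<in> {P \<in> pauli_strings n. expval n psi P \<noteq> 0}"
    by (simp add: mem_pauli_strings_iff)
  then show ?thesis
    unfolding pauli_card_def by (auto simp: card_gt_0_iff)
qed

section \<open>Renyi entropies of finite distributions\<close>

definition renyi_entropy :: "real \<Rightarrow> ('a \<Rightarrow> real) \<Rightarrow> 'a set \<Rightarrow> real" where
  "renyi_entropy \<alpha> p B =
    (if \<alpha> = 1 then - (\<Sum>b\<in>B. p b * log 2 (p b)) else 1 / (1 - \<alpha>) * log 2 (\<Sum>b\<in>B. p b powr \<alpha>))"

lemma powr_le_bernoulli:
  fixes x a :: real
  assumes "0 \<le> a" "a \<le> 1" "x > 0"
  shows "x powr a \<le> 1 + a * (x - 1)"
  using Youngs_inequality_0[of a "1 - a" x 1] assms by (simp add: algebra_simps)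

lemma bernoulli_le_powr:
  fixes x a :: real
  assumes "1 \<le> a" "x > 0"
  shows "1 + a * (x - 1) \<le> x powr a"
proof -
  have "x = (x powr a) powr (1 / a)"
    using assms by (simp add: powr_powr)
  also have "\<dots> \<le> 1 + (1 / a) * (x powr a - 1)"
    using assms by (intro powr_le_bernoulli) auto
  finally have "a * x \<le> a * (1 + (1 / a) * (x powr a - 1))"
    using assms by simp
  then show ?thesis
    using assms by (simp add: algebra_simps)
qed

lemma shannon_entropy_le_log_card:
  fixes p :: "'a \<Rightarrow> real"
  assumes fin: "finite B" and pos: "\<And>b. b \<in> B \<Longrightarrow> p b > 0" and sum1: "(\<Sum>b\<in>B. p b) = 1"
  shows "- (\<Sum>b\<in>B. p b * log 2 (p b)) \<le> log 2 (card B)"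
proof -
  define N where "N = real (card B)"
  have N: "N > 0"
    using fin sum1 by (auto simp: N_def card_gt_0_iff)
  have "p b * ln (1 / (N * p b)) \<le> 1 / N - p b" if b: "b \<in> B" for b
  proof -
    have "p b * ln (1 / (N * p b)) \<le> p b * (1 / (N * p b) - 1)"
      using pos[OF b] N by (intro mult_left_mono ln_le_minus_one) auto
    also have "\<dots> = 1 / N - p b"
      using pos[OF b] N by (simp add: field_simps)
    finally show ?thesis .
  qed
  then have "(\<Sum>b\<in>B. p b * ln (1 / (N * p b))) \<le> (\<Sum>b\<in>B. 1 / N - p b)"
    by (rule sum_mono)
  also have "\<dots> = 0"
    using sum1 N by (simp add: sum_subtractf N_def)
  also have "(\<Sum>b\<in>B. p b * ln (1 / (N * p b))) = (\<Sum>b\<in>B. - (p b * ln (p b)) - p b * ln N)"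
    using pos N by (intro sum.cong) (simp_all add: ln_div ln_mult algebra_simps)
  also have "\<dots> = - (\<Sum>b\<in>B. p b * ln (p b)) - ln N"
    by (simp add: sum_subtractf sum_negf sum_distrib_right[symmetric] sum1)
  finally have "- (\<Sum>b\<in>B. p b * ln (p b)) / ln 2 \<le> ln N / ln 2"
    by (intro divide_right_mono) simp_all
  then show ?thesis
    by (simp add: N_def log_def sum_divide_distrib[symmetric])
qed

lemma sum_powr_card_powr_bounds:
  fixes p :: "'a \<Rightarrow> real"
  assumes fin: "finite B" and pos: "\<And>b. b \<in> B \<Longrightarrow> p b > 0" and sum1: "(\<Sum>b\<in>B. p b) = 1"
  shows "0 \<le> a \<Longrightarrow> a \<le> 1 \<Longrightarrow> (\<Sum>b\<in>B. p b powr a) \<le> card B powr (1 - a)"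
    and "1 \<le> a \<Longrightarrow> card B powr (1 - a) \<le> (\<Sum>b\<in>B. p b powr a)"
proof -
  define N where "N = real (card B)"
  have N: "N > 0"
    using fin sum1 by (auto simp: N_def card_gt_0_iff)
  \<comment> \<open>the Bernoulli bounds applied to the N p b, whose mean over B is 1\<close>
  have "(\<Sum>b\<in>B. N * p b) = N"
    using sum1 by (simp flip: sum_distrib_left)
  then have affine: "(\<Sum>b\<in>B. 1 + a * (N * p b - 1)) = N"
    by (simp add: sum.distrib sum_subtractf N_def flip: sum_distrib_left)
  have scaled: "N powr a * (\<Sum>b\<in>B. p b powr a) = (\<Sum>b\<in>B. (N * p b) powr a)"
    unfolding sum_distrib_left using N pos by (intro sum.cong) (auto simp: powr_mult)
  have N_split: "N powr a * N powr (1 - a) = N"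
    using N by (simp flip: powr_add)
  show "(\<Sum>b\<in>B. p b powr a) \<le> card B powr (1 - a)" if "0 \<le> a" "a \<le> 1"
  proof -
    have "N powr a * (\<Sum>b\<in>B. p b powr a) \<le> N powr a * N powr (1 - a)"
      unfolding scaled N_split using N pos that
      by (subst affine[symmetric], intro sum_mono powr_le_bernoulli) auto
    then show ?thesis
      using N by (simp add: N_def)
  qed
  show "card B powr (1 - a) \<le> (\<Sum>b\<in>B. p b powr a)" if "1 \<le> a"
  proof -
    have "N powr a * N powr (1 - a) \<le> N powr a * (\<Sum>b\<in>B. p b powr a)"
      unfolding scaled N_split using N pos that
      by (subst (1) affine[symmetric], intro sum_mono bernoulli_le_powr) auto
    then show ?thesis
      using N by (simp add: N_def)
  qed
qed

lemma renyi_entropy_le_log_card: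
  fixes p :: "'a \<Rightarrow> real"
  assumes "finite B" "\<And>b. b \<in> B \<Longrightarrow> p b > 0" "(\<Sum>b\<in>B. p b) = 1" "\<alpha> \<ge> 0"
  shows "renyi_entropy \<alpha> p B \<le> log 2 (card B)"
proof -
  have card: "card B > 0"
    using assms(1,3) by (auto simp: card_gt_0_iff)
  have "p b powr \<alpha> > 0" if "b \<in> B" for b
    using assms(2)[OF that] by simp
  then have sum_pos: "(\<Sum>b\<in>B. p b powr \<alpha>) > 0"
    using assms(1) card by (intro sum_pos) auto
  consider "\<alpha> = 1" | "\<alpha> < 1" | "\<alpha> > 1"
    by linarith
  then show ?thesis
  proof cases
    case 1
    then show ?thesis
      unfolding renyi_entropy_def using shannon_entropy_le_log_card[OF assms(1-3)] by simp
  next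
    case 2
    have "log 2 (\<Sum>b\<in>B. p b powr \<alpha>) \<le> log 2 (card B powr (1 - \<alpha>))"
      using sum_powr_card_powr_bounds(1)[OF assms(1-3)] assms(4) 2 sum_pos card by simp
    then show ?thesis
      unfolding renyi_entropy_def using 2 card by (simp add: log_powr divide_le_eq mult.commute)
  next
    case 3
    have "log 2 (card B powr (1 - \<alpha>)) \<le> log 2 (\<Sum>b\<in>B. p b powr \<alpha>)"
      using sum_powr_card_powr_bounds(2)[OF assms(1-3)] 3 sum_pos card by simp
    then show ?thesis
      unfolding renyi_entropy_def using 3 card by (simp add: log_powr divide_le_eq_1 neg_divide_le_eq mult.commute)
  qed
qed

lemma stab_renyi_eq_renyi_entropy:
  "stab_renyi n psi \<alpha> = renyi_entropy \<alpha> (Xi n psi) {P \<in> pauli_strings n. Xi n psi P \<noteq> 0} - n"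
  unfolding stab_renyi_def renyi_entropy_def by simp

lemma stab_renyi_le_log_pauli_card:
  assumes pure: "pure_state n psi" and "\<alpha> \<ge> 0"
  shows "stab_renyi n psi \<alpha> \<le> log 2 (pauli_card n psi) - n"
proof -
  define B where "B = {P \<in> pauli_strings n. Xi n psi P \<noteq> 0}"
  have "(\<Sum>P\<in>B. Xi n psi P) = (\<Sum>P\<in>pauli_strings n. Xi n psi P)"
    by (rule sum.mono_neutral_left) (auto simp: B_def)
  then have "renyi_entropy \<alpha> (Xi n psi) B \<le> log 2 (card B)"
    using sum_Xi_eq_1[OF pure] assms(2)
    by (intro renyi_entropy_le_log_card) (auto simp: B_def Xi_eq_norm_expval)
  moreover have "B = {P \<in> pauli_strings n. expval n psi P \<noteq> 0}"
    by (simp add: B_def Xi_eq_norm_expval)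
  ultimately show ?thesis
    by (simp add: stab_renyi_eq_renyi_entropy pauli_card_def B_def)
qed

lemma log_pauli_card_le_stab_nullity:
  assumes pure: "pure_state n psi"
  shows "log 2 (pauli_card n psi) - n \<le> stab_nullity n psi"
proof -
  have card_pos: "pauli_card n psi > 0" "card (stab_group n psi) > 0"
    using pauli_card_pos[OF pure] replicate_PI_in_stab_group by (auto simp: card_gt_0_iff)
  have "log 2 (pauli_card n psi) + log 2 (card (stab_group n psi))
      = log 2 (real (pauli_card n psi) * real (card (stab_group n psi)))"
    using card_pos by (simp add: log_mult_pos)
  also have "\<dots> \<le> log 2 (2 ^ (2 * n))"
    using pauli_card_mult_card_stab_group_le[OF pure] card_pos by (simp add: power_mult)
  finally show ?thesis
    unfolding stab_nullity_def by simp
qed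

theorem mainTheorem2:
  fixes n :: nat and psi :: "nat \<Rightarrow> complex"
  assumes "n \<ge> 1"
    and "pure_state n psi"
  shows "real (card (stab_group n psi)) \<le> (2 ^ n)\<^sup>2 / real (pauli_card n psi)
     \<and> stab_renyi n psi 0 \<le> stab_nullity n psi
     \<and> (\<forall>\<alpha>::real. \<alpha> \<ge> 0 \<longrightarrow> stab_renyi n psi \<alpha> \<le> stab_nullity n psi)"
proof -
  have "real (pauli_card n psi) * real (card (stab_group n psi)) \<le> (2 ^ n)\<^sup>2"
    using pauli_card_mult_card_stab_group_le[OF assms(2)]
    by (simp add: power2_eq_square flip: power_mult_distrib)
  then have "real (card (stab_group n psi)) \<le> (2 ^ n)\<^sup>2 / real (pauli_card n psi)"
    using pauli_card_pos[OF assms(2)] by (simp add: pos_le_divide_eq mult.commute)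
  moreover have "stab_renyi n psi \<alpha> \<le> stab_nullity n psi" if "\<alpha> \<ge> 0" for \<alpha>
    using stab_renyi_le_log_pauli_card[OF assms(2) that] log_pauli_card_le_stab_nullity[OF assms(2)]
    by linarith
  ultimately show ?thesis
    by simp
qed

end
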